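(* Let $1\le k<n$ and let $P,Q\in\mathbb{H}_n$ be rank-$k$ orthogonal projections. Then $\operatorname{span}_{\mathbb{R}}S^{\mathbb{H}}(P)=\operatorname{span}_{\mathbb{R}}S^{\mathbb{H}}(Q)$ if and only if either $P=Q$, or $n=2k$ and $P=I-Q$.
   Context: $\mathbb{H}_n$ is the real space of $n\times n$ Hermitian matrices. $w_k(A)=\max\{|\operatorname{tr}(AP)|: P=P^*=P^2,\operatorname{tr}P=k\}$. For a rank-$k$ orthogonal projection $P$, $S^{\mathbb{H}}(P)=\{B\in\mathbb{H}_n:\operatorname{tr}(BP)=w_k(B)\}$. *)

theory Defs
  imports "HOL-Analysis.Analysis"
begin

text \<open>Complex n x n matrices, with n = CARD('n).\<close>

definition hermitian :: "complex^'n^'n \<Rightarrow> bool" where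
  "hermitian A \<longleftrightarrow> (\<forall>i j. A $ i $ j = cnj (A $ j $ i))"

definition mtrace :: "complex^'n^'n \<Rightarrow> complex" where
  "mtrace A = (\<Sum>i\<in>UNIV. A $ i $ i)"

definition orth_proj :: "nat \<Rightarrow> complex^'n^'n \<Rightarrow> bool" where
  "orth_proj k P \<longleftrightarrow> hermitian P \<and> P ** P = P \<and> mtrace P = of_nat k"

text \<open>The k-numerical radius w_k(A) = max |tr(AP)| over rank-k orthogonal projections
  (the maximum is attained, so it equals the supremum).\<close>
definition wk :: "nat \<Rightarrow> complex^'n^'n \<Rightarrow> real" where
  "wk k A = (SUP P\<in>{P. orth_proj k P}. cmod (mtrace (A ** P)))"

definition SH :: "nat \<Rightarrow> complex^'n^'n \<Rightarrow> (complex^'n^'n) set" where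
  "SH k P = {B. hermitian B \<and> mtrace (B ** P) = complex_of_real (wk k B)}"

end

theory Submission imports Defs begin

text \<open>
  The span of \<open>S\<^sup>H(P)\<close> is exactly the commutant of \<open>P\<close> in \<open>\<bbbH>\<^sub>n\<close>.
  If a Hermitian \<open>B\<close> does not commute with \<open>P\<close>, there are unit vectors \<open>a \<in> ran P\<close>,
  \<open>b \<in> ker P\<close> with \<open>\<langle>b, B a\<rangle> \<noteq> 0\<close>; tilting \<open>a\<close> slightly towards \<open>b\<close> gives a rank-\<open>k\<close>
  projection \<open>R\<close> with \<open>tr(BR) > tr(BP)\<close>, so \<open>B \<notin> S\<^sup>H(P)\<close>. Conversely, if \<open>B\<close> commutes
  with \<open>P\<close>, then \<open>B + tP \<in> S\<^sup>H(P)\<close> for large \<open>t\<close>, and \<open>P \<in> S\<^sup>H(P)\<close>.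
  If the commutant of \<open>Q\<close> is contained in that of \<open>P\<close>, then \<open>ran Q\<close> lies in \<open>ran P\<close> or in
  \<open>ker P\<close>: otherwise vectors \<open>x \<in> ran Q \<inter> ran P\<close>, \<open>y \<in> ran Q \<inter> ker P\<close> give
  \<open>x y\<^sup>* + y x\<^sup>*\<close>, which commutes with \<open>Q\<close> but not with \<open>P\<close>. Applied to \<open>Q\<close> and \<open>I - Q\<close>
  this leaves \<open>P \<in> {Q, I - Q, 0, I}\<close>, and \<open>0 < k < n\<close> excludes the last two.
\<close>

definition adj :: "complex^'n^'n \<Rightarrow> complex^'n^'n" where
  "adj A = (\<chi> i j. cnj (A$j$i))"

definition cinner :: "complex^'n \<Rightarrow> complex^'n \<Rightarrow> complex" where
  "cinner x y = (\<Sum>i\<in>UNIV. cnj (x$i) * y$i)"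

definition outer :: "complex^'n \<Rightarrow> complex^'n \<Rightarrow> complex^'n^'n" where
  "outer x y = (\<chi> i j. x$i * cnj (y$j))"

definition entry_norm_sum :: "complex^'n^'n \<Rightarrow> real" where
  "entry_norm_sum B = (\<Sum>i\<in>UNIV. \<Sum>j\<in>UNIV. cmod (B$i$j))"

lemma hermitian_iff_adj: "hermitian A \<longleftrightarrow> adj A = A"
  unfolding hermitian_def adj_def vec_eq_iff by (simp add: eq_commute)

lemma adj_mult: "adj (A ** B) = adj B ** adj A"
  by (simp add: adj_def vec_eq_iff matrix_matrix_mult_def mult.commute)

lemma adj_add: "adj (A + B) = adj A + adj B"
  by (simp add: adj_def vec_eq_iff)

lemma adj_diff: "adj (A - B) = adj A - adj B"
  by (simp add: adj_def vec_eq_iff)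

lemma adj_scaleR: "adj (c *\<^sub>R A) = c *\<^sub>R adj A"
  by (simp add: adj_def vec_eq_iff)

lemma adj_zero [simp]: "adj 0 = 0"
  by (simp add: adj_def vec_eq_iff)

lemma adj_mat1 [simp]: "adj (mat 1) = mat 1"
  by (simp add: adj_def vec_eq_iff mat_def)

lemma adj_outer: "adj (outer x y) = outer y x"
  by (simp add: adj_def vec_eq_iff outer_def)

lemma hermitian_add: "hermitian A \<Longrightarrow> hermitian B \<Longrightarrow> hermitian (A + B)"
  by (simp add: hermitian_iff_adj adj_add)

lemma hermitian_diff: "hermitian A \<Longrightarrow> hermitian B \<Longrightarrow> hermitian (A - B)"
  by (simp add: hermitian_iff_adj adj_diff)

lemma hermitian_scaleR: "hermitian A \<Longrightarrow> hermitian (c *\<^sub>R A)"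
  by (simp add: hermitian_iff_adj adj_scaleR)

lemma hermitian_mat1: "hermitian (mat 1 :: complex^'n^'n)"
  by (simp add: hermitian_iff_adj)

lemma hermitian_zero: "hermitian (0 :: complex^'n^'n)"
  by (simp add: hermitian_def)

lemma hermitian_outer: "hermitian (outer x x)"
  by (simp add: hermitian_iff_adj adj_outer)

lemma matrix_diff_ldistrib: "(A::complex^'n^'n) ** (B - C) = A ** B - A ** C"
  by (simp add: matrix_matrix_mult_def vec_eq_iff sum_subtractf algebra_simps)

lemma matrix_diff_rdistrib: "((B::complex^'n^'n) - C) ** A = B ** A - C ** A"
  by (simp add: matrix_matrix_mult_def vec_eq_iff sum_subtractf algebra_simps)

lemma matrix_add_rdistrib: "((B::complex^'n^'n) + C) ** A = B ** A + C ** A"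
  by (simp add: matrix_matrix_mult_def vec_eq_iff sum.distrib algebra_simps)

lemma mtrace_add: "mtrace (A + B) = mtrace A + mtrace B"
  by (simp add: mtrace_def sum.distrib)

lemma mtrace_diff: "mtrace (A - B) = mtrace A - mtrace B"
  by (simp add: mtrace_def sum_subtractf)

lemma mtrace_scaleR: "mtrace (c *\<^sub>R A) = of_real c * mtrace A"
  by (simp add: mtrace_def sum_distrib_left) (simp add: scaleR_conv_of_real)

lemma mtrace_mat1: "mtrace (mat 1 :: complex^'n^'n) = of_nat CARD('n)"
  by (simp add: mtrace_def mat_def)

lemma mtrace_adj: "mtrace (adj A) = cnj (mtrace A)"
  by (simp add: mtrace_def adj_def)

lemma mtrace_mult_commute: "mtrace (A ** B) = mtrace (B ** A)"
proof -
  have "mtrace (A ** B) = (\<Sum>i\<in>UNIV. \<Sum>j\<in>UNIV. A$i$j * B$j$i)"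
    by (simp add: mtrace_def matrix_matrix_mult_def)
  also have "\<dots> = (\<Sum>j\<in>UNIV. \<Sum>i\<in>UNIV. A$i$j * B$j$i)"
    by (rule sum.swap)
  also have "\<dots> = mtrace (B ** A)"
    by (simp add: mtrace_def matrix_matrix_mult_def mult.commute)
  finally show ?thesis .
qed

lemma Im_mtrace_herm_mult:
  assumes "hermitian A" "hermitian B"
  shows "Im (mtrace (A ** B)) = 0"
proof -
  have "cnj (mtrace (A ** B)) = mtrace (adj (A ** B))"
    by (simp add: mtrace_adj)
  also have "\<dots> = mtrace (B ** A)"
    using assms by (simp add: adj_mult hermitian_iff_adj)
  also have "\<dots> = mtrace (A ** B)"
    by (rule mtrace_mult_commute)
  finally show ?thesis
    by (metis Reals_cnj_iff complex_is_Real_iff)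
qed

lemma cinner_add_left: "cinner (x + y) z = cinner x z + cinner y z"
  by (simp add: cinner_def sum.distrib algebra_simps)

lemma cinner_add_right: "cinner z (x + y) = cinner z x + cinner z y"
  by (simp add: cinner_def sum.distrib algebra_simps)

lemma cinner_scale_left: "cinner (c *s x) y = cnj c * cinner x y"
  by (simp add: cinner_def sum_distrib_left mult_ac)

lemma cinner_scale_right: "cinner x (c *s y) = c * cinner x y"
  by (simp add: cinner_def sum_distrib_left mult_ac)

lemma cinner_commute: "cnj (cinner x y) = cinner y x"
  by (simp add: cinner_def mult.commute)

lemma cinner_zero_left [simp]: "cinner 0 x = 0"
  by (simp add: cinner_def)

lemma cinner_zero_right [simp]: "cinner x 0 = 0"
  by (simp add: cinner_def)

lemma cinner_adj: "cinner x (A *v y) = cinner (adj A *v x) y"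
proof -
  have "cinner x (A *v y) = (\<Sum>i\<in>UNIV. \<Sum>j\<in>UNIV. cnj (x$i) * A$i$j * y$j)"
    by (simp add: cinner_def matrix_vector_mult_def sum_distrib_left mult.assoc)
  also have "\<dots> = (\<Sum>j\<in>UNIV. \<Sum>i\<in>UNIV. cnj (x$i) * A$i$j * y$j)"
    by (rule sum.swap)
  also have "\<dots> = cinner (adj A *v x) y"
    by (simp add: cinner_def adj_def matrix_vector_mult_def sum_distrib_right sum_distrib_left
        mult_ac)
  finally show ?thesis .
qed

lemma cinner_hermitian: "hermitian A \<Longrightarrow> cinner (A *v x) y = cinner x (A *v y)"
  by (simp add: cinner_adj hermitian_iff_adj)

lemma cinner_self: "cinner x x = of_real (\<Sum>i\<in>UNIV. (cmod (x$i))\<^sup>2)"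
proof -
  have "cinner x x = (\<Sum>i\<in>UNIV. x$i * cnj (x$i))"
    unfolding cinner_def by (simp only: mult.commute)
  also have "\<dots> = (\<Sum>i\<in>UNIV. of_real ((cmod (x$i))\<^sup>2))"
    by (simp only: complex_norm_square)
  finally show ?thesis
    by (simp only: of_real_sum)
qed

lemma Re_cinner_self_pos: "x \<noteq> 0 \<Longrightarrow> 0 < Re (cinner x x)"
proof -
  assume "x \<noteq> 0"
  then obtain i where "x$i \<noteq> 0"
    by (auto simp: vec_eq_iff)
  then have "0 < (cmod (x$i))\<^sup>2"
    by simp
  also have "\<dots> \<le> (\<Sum>i\<in>UNIV. (cmod (x$i))\<^sup>2)"
    by (rule member_le_sum) auto
  finally show ?thesis
    by (simp add: cinner_self)
qed

lemma exists_unit_multiple: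
  assumes "x \<noteq> 0"
  shows "\<exists>r. r \<noteq> 0 \<and> cinner (r *s x) (r *s x) = 1"
proof -
  define q where "q = Re (cinner x x)"
  have q: "0 < q"
    using Re_cinner_self_pos[OF assms] by (simp add: q_def)
  have xx: "cinner x x = of_real q"
    by (simp add: q_def cinner_self)
  define r where "r = complex_of_real (1 / sqrt q)"
  have "cinner (r *s x) (r *s x) = of_real ((1 / sqrt q) * (1 / sqrt q) * q)"
    by (simp only: r_def cinner_scale_left cinner_scale_right xx complex_cnj_complex_of_real
        of_real_mult mult.assoc)
  also have "(1 / sqrt q) * (1 / sqrt q) * q = 1"
  proof -
    have "sqrt q * sqrt q = q"
      using q by simp
    then show ?thesis
      using q by (simp add: field_simps)
  qed
  finally have "cinner (r *s x) (r *s x) = 1"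
    by simp
  moreover have "r \<noteq> 0"
    using q by (simp add: r_def)
  ultimately show ?thesis
    by blast
qed

lemma mtrace_mult_outer: "mtrace (A ** outer x y) = cinner y (A *v x)"
  by (simp add: mtrace_def cinner_def outer_def matrix_matrix_mult_def matrix_vector_mult_def
      sum_distrib_left mult_ac)

lemma mtrace_outer: "mtrace (outer x y) = cinner y x"
  using mtrace_mult_outer[of "mat 1" x y] by simp

lemma matrix_mult_outer: "A ** outer x y = outer (A *v x) y"
  by (simp add: outer_def matrix_matrix_mult_def matrix_vector_mult_def vec_eq_iff
      sum_distrib_right sum_distrib_left mult_ac)

lemma outer_mult_matrix: "outer x y ** A = outer x (adj A *v y)"
  by (simp add: outer_def matrix_matrix_mult_def matrix_vector_mult_def vec_eq_iff adj_def
      sum_distrib_left mult_ac)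

lemma outer_mult_vector: "outer x y *v v = cinner y v *s x"
  by (simp add: outer_def cinner_def matrix_vector_mult_def vec_eq_iff sum_distrib_left mult_ac)

lemma outer_zero_left [simp]: "outer 0 y = 0"
  by (simp add: outer_def vec_eq_iff)

lemma outer_zero_right [simp]: "outer x 0 = 0"
  by (simp add: outer_def vec_eq_iff)

lemma column_zero [simp]: "column j 0 = 0"
  by (simp add: column_def vec_eq_iff)

lemma column_matrix_mult: "column j (A ** B) = A *v column j B"
  by (simp add: column_def matrix_matrix_mult_def matrix_vector_mult_def vec_eq_iff)

lemma hermitian_mult_entry:
  assumes "hermitian Q"
  shows "(Q ** X)$i$j = cinner (column i Q) (column j X)"
proof -
  have "(adj Q ** X)$i$j = cinner (column i Q) (column j X)"
    by (simp add: matrix_matrix_mult_def cinner_def column_def adj_def)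
  then show ?thesis
    using assms by (simp add: hermitian_iff_adj)
qed

section \<open>Trace estimates for Gram matrices\<close>

lemma Re_mtrace_gram: "Re (mtrace (V ** adj V)) = (\<Sum>i\<in>UNIV. \<Sum>l\<in>UNIV. (cmod (V$i$l))\<^sup>2)"
proof -
  have "(V ** adj V)$i$i = of_real (\<Sum>l\<in>UNIV. (cmod (V$i$l))\<^sup>2)" for i
  proof -
    have "(V ** adj V)$i$i = (\<Sum>l\<in>UNIV. V$i$l * cnj (V$i$l))"
      by (simp add: matrix_matrix_mult_def adj_def)
    also have "\<dots> = (\<Sum>l\<in>UNIV. of_real ((cmod (V$i$l))\<^sup>2))"
      by (simp only: complex_norm_square)
    finally show ?thesis
      by (simp only: of_real_sum)
  qed
  then show ?thesis
    by (simp add: mtrace_def)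
qed

lemma norm_gram_entry_le: "cmod ((V ** adj V)$i$j) \<le> Re (mtrace (V ** adj V))"
proof -
  have row_le: "(\<Sum>l\<in>UNIV. (cmod (V$m$l))\<^sup>2) \<le> Re (mtrace (V ** adj V))" for m
    unfolding Re_mtrace_gram by (rule member_le_sum) (auto intro: sum_nonneg)
  have "cmod ((V ** adj V)$i$j) = cmod (\<Sum>l\<in>UNIV. V$i$l * cnj (V$j$l))"
    by (simp add: matrix_matrix_mult_def adj_def)
  also have "\<dots> \<le> (\<Sum>l\<in>UNIV. cmod (V$i$l) * cmod (V$j$l))"
    by (rule order_trans[OF norm_sum]) (simp add: norm_mult)
  also have "\<dots> \<le> (\<Sum>l\<in>UNIV. ((cmod (V$i$l))\<^sup>2 + (cmod (V$j$l))\<^sup>2) / 2)"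
  proof (rule sum_mono)
    fix l
    show "cmod (V$i$l) * cmod (V$j$l) \<le> ((cmod (V$i$l))\<^sup>2 + (cmod (V$j$l))\<^sup>2) / 2"
      using sum_squares_bound[of "cmod (V$i$l)" "cmod (V$j$l)"] by simp
  qed
  also have "\<dots> = ((\<Sum>l\<in>UNIV. (cmod (V$i$l))\<^sup>2) + (\<Sum>l\<in>UNIV. (cmod (V$j$l))\<^sup>2)) / 2"
    by (simp only: sum_divide_distrib[symmetric] sum.distrib)
  also have "\<dots> \<le> Re (mtrace (V ** adj V))"
    using row_le[of i] row_le[of j] by simp
  finally show ?thesis .
qed

lemma norm_mtrace_mult_gram_le:
  "cmod (mtrace (B ** (V ** adj V))) \<le> entry_norm_sum B * Re (mtrace (V ** adj V))"
proof -
  let ?A = "V ** adj V" and ?T = "Re (mtrace (V ** adj V))"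
  have "cmod (mtrace (B ** ?A)) = cmod (\<Sum>i\<in>UNIV. \<Sum>j\<in>UNIV. B$i$j * ?A$j$i)"
    by (simp add: mtrace_def matrix_matrix_mult_def)
  also have "\<dots> \<le> (\<Sum>i\<in>UNIV. \<Sum>j\<in>UNIV. cmod (B$i$j) * cmod (?A$j$i))"
    by (rule order_trans[OF norm_sum], rule sum_mono, rule order_trans[OF norm_sum])
       (simp add: norm_mult)
  also have "\<dots> \<le> (\<Sum>i\<in>UNIV. \<Sum>j\<in>UNIV. cmod (B$i$j) * ?T)"
    by (intro sum_mono mult_left_mono norm_gram_entry_le) auto
  also have "\<dots> = entry_norm_sum B * ?T"
    by (simp add: entry_norm_sum_def sum_distrib_right)
  finally show ?thesis .
qed

lemma Re_mtrace_gram_nonneg: "0 \<le> Re (mtrace (V ** adj V))"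
  by (simp add: Re_mtrace_gram sum_nonneg)

lemma entry_norm_sum_nonneg: "0 \<le> entry_norm_sum B"
  by (simp add: entry_norm_sum_def sum_nonneg)

lemma commuting_mtrace_sandwich:
  assumes "B ** Y = Y ** B" "Y ** Y = Y"
  shows "mtrace (B ** (Y ** X ** Y)) = mtrace (B ** (Y ** X))"
proof -
  have "mtrace (B ** (Y ** X ** Y)) = mtrace ((B ** (Y ** X)) ** Y)"
    by (simp add: matrix_mul_assoc)
  also have "\<dots> = mtrace ((Y ** B) ** (Y ** X))"
    by (simp add: mtrace_mult_commute[of _ Y] matrix_mul_assoc)
  also have "\<dots> = mtrace (B ** ((Y ** Y) ** X))"
    by (simp add: assms(1)[symmetric] matrix_mul_assoc)
  finally show ?thesis
    by (simp add: assms(2))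
qed

lemma mtrace_idem_sandwich: "Y ** Y = Y \<Longrightarrow> mtrace (Y ** X ** Y) = mtrace (Y ** X)"
  using commuting_mtrace_sandwich[of "mat 1" Y X] by simp

lemma gram_mult_proj:
  assumes "hermitian Y" "hermitian R" "R ** R = R"
  shows "(Y ** R) ** adj (Y ** R) = Y ** R ** Y"
proof -
  have "adj (Y ** R) = R ** Y"
    using assms by (simp add: adj_mult hermitian_iff_adj)
  then have "(Y ** R) ** adj (Y ** R) = Y ** (R ** R) ** Y"
    by (simp add: matrix_mul_assoc)
  then show ?thesis
    using assms(3) by simp
qed

lemma norm_mtrace_mult_sandwich_le:
  assumes "hermitian Y" "Y ** Y = Y" "hermitian R" "R ** R = R"
  shows "cmod (mtrace (B ** (Y ** R ** Y))) \<le> entry_norm_sum B * Re (mtrace (Y ** R))"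
  using norm_mtrace_mult_gram_le[of B "Y ** R"]
  by (simp add: gram_mult_proj assms mtrace_idem_sandwich)

lemma Re_mtrace_proj_mult_nonneg:
  assumes "hermitian Y" "Y ** Y = Y" "hermitian R" "R ** R = R"
  shows "0 \<le> Re (mtrace (Y ** R))"
  using Re_mtrace_gram_nonneg[of "Y ** R"]
  by (simp add: gram_mult_proj assms mtrace_idem_sandwich)

lemma compl_proj:
  assumes "hermitian P" "P ** P = P"
  shows "hermitian (mat 1 - P)" "(mat 1 - P) ** (mat 1 - P) = mat 1 - P"
    "P ** (mat 1 - P) = 0"
  using assms by (simp_all add: hermitian_diff hermitian_mat1 matrix_diff_ldistrib
      matrix_diff_rdistrib)

lemma norm_mtrace_mult_orth_proj_le:
  assumes "orth_proj k R"
  shows "cmod (mtrace (B ** R)) \<le> entry_norm_sum B * real k"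
  using norm_mtrace_mult_gram_le[of B R] assms
  by (simp add: orth_proj_def hermitian_iff_adj)

lemma wk_ge:
  assumes "orth_proj k R"
  shows "cmod (mtrace (B ** R)) \<le> wk k B"
proof -
  have bdd: "bdd_above ((\<lambda>P. cmod (mtrace (B ** P))) ` {P. orth_proj k P})"
    by (rule bdd_aboveI2[where M = "entry_norm_sum B * real k"])
       (simp add: norm_mtrace_mult_orth_proj_le)
  have "R \<in> {P. orth_proj k P}"
    using assms by simp
  from cSUP_upper[OF this bdd] show ?thesis
    unfolding wk_def .
qed

lemma wk_le:
  fixes B P :: "complex^'n^'n"
  assumes "orth_proj k P" "\<And>R. orth_proj k R \<Longrightarrow> cmod (mtrace (B ** R)) \<le> c"
  shows "wk k B \<le> c"
  unfolding wk_def using assms by (intro cSUP_least) auto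

lemma mem_SH_iff:
  assumes P: "orth_proj k P"
  shows "B \<in> SH k P \<longleftrightarrow>
    hermitian B \<and> (\<forall>R. orth_proj k R \<longrightarrow> cmod (mtrace (B ** R)) \<le> Re (mtrace (B ** P)))"
proof
  assume "B \<in> SH k P"
  then have Bh: "hermitian B" and BP: "Re (mtrace (B ** P)) = wk k B"
    by (simp_all add: SH_def)
  have "cmod (mtrace (B ** R)) \<le> Re (mtrace (B ** P))" if "orth_proj k R" for R
    using wk_ge[OF that, of B] BP by simp
  with Bh show "hermitian B \<and> (\<forall>R. orth_proj k R \<longrightarrow> cmod (mtrace (B ** R)) \<le> Re (mtrace (B ** P)))"
    by blast
next
  assume "hermitian B \<and> (\<forall>R. orth_proj k R \<longrightarrow> cmod (mtrace (B ** R)) \<le> Re (mtrace (B ** P)))"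
  then have Bh: "hermitian B"
    and le: "\<And>R. orth_proj k R \<Longrightarrow> cmod (mtrace (B ** R)) \<le> Re (mtrace (B ** P))"
    by simp_all
  have "wk k B \<le> Re (mtrace (B ** P))"
    by (rule wk_le[OF P le])
  moreover have "Re (mtrace (B ** P)) \<le> wk k B"
    using complex_Re_le_cmod[of "mtrace (B ** P)"] wk_ge[OF P, of B] by linarith
  moreover have "Im (mtrace (B ** P)) = 0"
    using Bh P by (simp add: Im_mtrace_herm_mult orth_proj_def)
  ultimately show "B \<in> SH k P"
    using Bh by (simp add: SH_def complex_eq_iff)
qed

section \<open>Commuting matrices lie in the span\<close>

text \<open>
  With \<open>P' = I - P\<close> and \<open>R' = I - R\<close>, a \<open>B\<close> commuting with \<open>P\<close> satisfies
  \<open>tr(BR) - tr(BP) = tr(B P' R P') - tr(B P R' P)\<close>, and both sandwiches are positive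
  with trace \<open>tr P - tr(PR)\<close> (as \<open>tr R = tr P\<close>).
\<close>

lemma commuting_mtrace_gain_le:
  fixes B P R :: "complex^'n^'n"
  assumes Ph: "hermitian P" and Pi: "P ** P = P" and Rh: "hermitian R" and Ri: "R ** R = R"
    and tr: "mtrace R = mtrace P" and comm: "B ** P = P ** B"
  shows "Re (mtrace (B ** R)) - Re (mtrace (B ** P))
    \<le> 2 * entry_norm_sum B * Re (mtrace P - mtrace (P ** R))"
proof -
  define Pc where "Pc = mat 1 - P"
  define Rc where "Rc = mat 1 - R"
  note Pc = compl_proj[OF Ph Pi, folded Pc_def] and Rc = compl_proj[OF Rh Ri, folded Rc_def]
  have comm_c: "B ** Pc = Pc ** B"
    by (simp add: Pc_def matrix_diff_ldistrib matrix_diff_rdistrib comm)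
  have "mtrace (B ** R) - mtrace (B ** P) = mtrace (B ** (Pc ** R)) - mtrace (B ** (P ** Rc))"
    by (simp add: Pc_def Rc_def matrix_diff_ldistrib matrix_diff_rdistrib mtrace_diff)
  also have "\<dots> = mtrace (B ** (Pc ** R ** Pc)) - mtrace (B ** (P ** Rc ** P))"
    by (simp add: commuting_mtrace_sandwich[OF comm Pi] commuting_mtrace_sandwich[OF comm_c Pc(2)])
  finally have gain: "mtrace (B ** R) - mtrace (B ** P)
      = mtrace (B ** (Pc ** R ** Pc)) - mtrace (B ** (P ** Rc ** P))" .
  have "mtrace (Pc ** R) = mtrace P - mtrace (P ** R)" "mtrace (P ** Rc) = mtrace P - mtrace (P ** R)"
    by (simp_all add: Pc_def Rc_def matrix_diff_ldistrib matrix_diff_rdistrib mtrace_diff tr)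
  then have "cmod (mtrace (B ** (Pc ** R ** Pc))) \<le> entry_norm_sum B * Re (mtrace P - mtrace (P ** R))"
      "cmod (mtrace (B ** (P ** Rc ** P))) \<le> entry_norm_sum B * Re (mtrace P - mtrace (P ** R))"
    using norm_mtrace_mult_sandwich_le[OF Pc(1,2) Rh Ri, of B]
      norm_mtrace_mult_sandwich_le[OF Ph Pi Rc(1,2), of B] by simp_all
  moreover have "Re (mtrace (B ** R)) - Re (mtrace (B ** P))
      = Re (mtrace (B ** (Pc ** R ** Pc))) - Re (mtrace (B ** (P ** Rc ** P)))"
    using arg_cong[OF gain, of Re] by simp
  ultimately show ?thesis
    using abs_Re_le_cmod[of "mtrace (B ** (Pc ** R ** Pc))"]
      abs_Re_le_cmod[of "mtrace (B ** (P ** Rc ** P))"] by linarith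
qed

lemma commuting_shift_mem_SH:
  fixes B P :: "complex^'n^'n"
  assumes B: "hermitian B" and P: "orth_proj k P" and comm: "B ** P = P ** B"
    and t: "2 * entry_norm_sum B \<le> t"
  shows "B + t *\<^sub>R P \<in> SH k P"
  unfolding mem_SH_iff[OF P]
proof (intro conjI allI impI)
  have Ph: "hermitian P" and Pi: "P ** P = P" and Pt: "mtrace P = of_nat k"
    using P by (auto simp: orth_proj_def)
  show Ch: "hermitian (B + t *\<^sub>R P)"
    by (intro hermitian_add hermitian_scaleR B Ph)
  fix R :: "complex^'n^'n"
  assume R: "orth_proj k R"
  have Rh: "hermitian R" and Ri: "R ** R = R" and Rt: "mtrace R = of_nat k"
    using R by (auto simp: orth_proj_def)
  let ?M = "entry_norm_sum B"
  define x where "x = Re (mtrace (B ** R))"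
  define y where "y = Re (mtrace (B ** P))"
  define p where "p = Re (mtrace (P ** R))"
  have gain: "x - y \<le> 2 * ?M * (real k - p)"
    using commuting_mtrace_gain_le[OF Ph Pi Rh Ri _ comm] Pt Rt by (simp add: x_def y_def p_def)
  have "0 \<le> p"
    unfolding p_def by (rule Re_mtrace_proj_mult_nonneg[OF Ph Pi Rh Ri])
  moreover have "p \<le> real k"
    using Re_mtrace_proj_mult_nonneg[OF compl_proj(1,2)[OF Ph Pi] Rh Ri] Rt
    by (simp add: p_def matrix_diff_rdistrib mtrace_diff)
  moreover have "\<bar>x\<bar> \<le> ?M * real k" "\<bar>y\<bar> \<le> ?M * real k"
    using norm_mtrace_mult_orth_proj_le[OF R, of B] norm_mtrace_mult_orth_proj_le[OF P, of B]
      abs_Re_le_cmod[of "mtrace (B ** R)"] abs_Re_le_cmod[of "mtrace (B ** P)"]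
    unfolding x_def y_def by linarith+
  moreover have "2 * ?M * (real k - p) \<le> t * real k - t * p"
    using t \<open>p \<le> real k\<close> mult_right_mono[of "2 * ?M" t "real k - p"]
    by (simp add: right_diff_distrib)
  moreover have "2 * ?M * real k \<le> t * real k" "0 \<le> t * p"
    using t entry_norm_sum_nonneg[of B] \<open>0 \<le> p\<close> by (simp_all add: mult_right_mono)
  ultimately have "\<bar>x + t * p\<bar> \<le> y + t * real k"
    using gain unfolding abs_le_iff by linarith
  moreover have "Re (mtrace ((B + t *\<^sub>R P) ** R)) = x + t * p"
    by (simp add: matrix_add_rdistrib mtrace_add x_def p_def scalar_matrix_assoc[symmetric]
        mtrace_scaleR)
  moreover have "Re (mtrace ((B + t *\<^sub>R P) ** P)) = y + t * real k"
    by (simp add: matrix_add_rdistrib mtrace_add y_def scalar_matrix_assoc[symmetric]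
        mtrace_scaleR Pi Pt)
  moreover have "Im (mtrace ((B + t *\<^sub>R P) ** R)) = 0"
    by (rule Im_mtrace_herm_mult[OF Ch Rh])
  ultimately show "cmod (mtrace ((B + t *\<^sub>R P) ** R)) \<le> Re (mtrace ((B + t *\<^sub>R P) ** P))"
    by (simp add: cmod_eq_Re)
qed

definition commutant :: "complex^'n^'n \<Rightarrow> (complex^'n^'n) set" where
  "commutant P = {B. hermitian B \<and> B ** P = P ** B}"

lemma subspace_commutant: "subspace (commutant P)"
  unfolding subspace_def commutant_def
  by (auto simp: hermitian_zero hermitian_add hermitian_scaleR matrix_add_ldistrib
      matrix_add_rdistrib scalar_matrix_assoc[symmetric] matrix_scalar_ac)

lemma commutant_compl: "commutant (mat 1 - Q) = commutant Q"
  unfolding commutant_def by (auto simp: matrix_diff_ldistrib matrix_diff_rdistrib)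

lemma commutant_subset_span_SH:
  assumes P: "orth_proj k P"
  shows "commutant P \<subseteq> span (SH k P)"
proof
  fix B
  assume "B \<in> commutant P"
  then have B: "hermitian B" and comm: "B ** P = P ** B"
    by (auto simp: commutant_def)
  define t where "t = 2 * entry_norm_sum B"
  have "B + t *\<^sub>R P \<in> SH k P"
    by (rule commuting_shift_mem_SH[OF B P comm]) (simp add: t_def)
  moreover have "0 + 1 *\<^sub>R P \<in> SH k P"
    by (rule commuting_shift_mem_SH[OF hermitian_zero P]) (simp_all add: entry_norm_sum_def)
  ultimately have "(B + t *\<^sub>R P) - t *\<^sub>R P \<in> span (SH k P)"
    by (intro span_diff span_scale span_base) simp_all
  then show "B \<in> span (SH k P)"
    by simp
qed

section \<open>Elements of \<open>S\<^sup>H(P)\<close> commute with \<open>P\<close>\<close>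

lemma orth_proj_rank_one_exchange:
  fixes P :: "complex^'n^'n"
  assumes P: "orth_proj k P"
    and aa: "cinner a a = 1" and ww: "cinner w w = 1"
    and Pa: "P *v a = a" and Pw: "P *v w = cinner a w *s a"
  shows "orth_proj k (P - outer a a + outer w w)"
proof -
  have Ph: "hermitian P" and Pi: "P ** P = P"
    using P by (auto simp: orth_proj_def)
  define P' where "P' = P - outer a a"
  define W where "W = outer w w"
  have P'h: "hermitian P'"
    unfolding P'_def by (intro hermitian_diff Ph hermitian_outer)
  have P'w: "P' *v w = 0"
    unfolding P'_def by (simp add: matrix_vector_mult_diff_rdistrib Pw outer_mult_vector)
  have "P ** outer a a = outer a a" "outer a a ** P = outer a a"
    "outer a a ** outer a a = outer a a"
    using Ph by (simp_all add: matrix_mult_outer outer_mult_matrix hermitian_iff_adj Pa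
        outer_mult_vector aa)
  then have "P' ** P' = P'"
    unfolding P'_def by (simp add: matrix_diff_ldistrib matrix_diff_rdistrib Pi)
  moreover have "P' ** W = 0" "W ** P' = 0" "W ** W = W"
    using P'h by (simp_all add: W_def matrix_mult_outer outer_mult_matrix hermitian_iff_adj
        P'w outer_mult_vector ww)
  ultimately have "(P' + W) ** (P' + W) = P' + W"
    by (simp add: matrix_add_ldistrib matrix_add_rdistrib)
  moreover have "hermitian (P' + W)"
    unfolding W_def by (intro hermitian_add P'h hermitian_outer)
  moreover have "mtrace (P' + W) = mtrace P"
    by (simp add: P'_def W_def mtrace_add mtrace_diff mtrace_outer aa ww)
  ultimately show ?thesis
    using P by (simp add: orth_proj_def P'_def W_def)
qed

lemma rotation_gain:
  fixes s m al be :: real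
  assumes m: "0 < m" and s: "s = m / (\<bar>be - al\<bar> + 1)"
  shows "al < (al + 2 * s * m + s * s * be) / (1 + s * s)"
proof -
  have s0: "0 < s"
    using m s by simp
  have "s * \<bar>be - al\<bar> + s = m"
    using s by (simp add: field_simps)
  then have "s * \<bar>be - al\<bar> < m"
    using s0 by linarith
  then have "s * (s * \<bar>be - al\<bar>) < s * m"
    using s0 by simp
  moreover have "s * (s * (al - be)) \<le> s * (s * \<bar>be - al\<bar>)"
    using s0 by (intro mult_left_mono) auto
  ultimately have "s * (s * (al - be)) < 2 * (s * m)"
    using mult_pos_pos[OF s0 m] by linarith
  then have "al * (1 + s * s) < al + 2 * s * m + s * s * be"
    by (simp add: algebra_simps)
  then show ?thesis
    by (simp add: less_divide_eq add_pos_nonneg)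
qed

text \<open>
  For orthonormal \<open>a, b\<close> with \<open>c = \<langle>b, B a\<rangle> \<noteq> 0\<close>, the unit vector
  \<open>w = (a + s (c / \<bar>c\<bar>) b) / \<surd>(1 + s\<^sup>2)\<close> has
  \<open>\<langle>w, B w\<rangle> = (\<alpha> + 2 s \<bar>c\<bar> + s\<^sup>2 \<beta>) / (1 + s\<^sup>2)\<close> with \<open>\<alpha> = \<langle>a, B a\<rangle>\<close>, \<open>\<beta> = \<langle>b, B b\<rangle>\<close>.
\<close>

lemma exists_rotation_increasing_form:
  fixes B :: "complex^'n^'n" and a b :: "complex^'n"
  assumes B: "hermitian B" and aa: "cinner a a = 1" and bb: "cinner b b = 1"
    and ab: "cinner a b = 0" and c0: "cinner b (B *v a) \<noteq> 0"
  shows "\<exists>u v. cinner (u *s a + v *s b) (u *s a + v *s b) = 1 \<and>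
    Re (cinner a (B *v a)) < Re (cinner (u *s a + v *s b) (B *v (u *s a + v *s b)))"
proof -
  define c where "c = cinner b (B *v a)"
  define m where "m = cmod c"
  have m0: "0 < m"
    using c0 by (simp add: m_def c_def)
  define al where "al = Re (cinner a (B *v a))"
  define be where "be = Re (cinner b (B *v b))"
  define s where "s = m / (\<bar>be - al\<bar> + 1)"
  define mu where "mu = 1 / sqrt (1 + s * s)"
  define lam where "lam = complex_of_real (s / m) * c"
  define y where "y = a + lam *s b"
  have ba: "cinner b a = 0"
    using ab cinner_commute[of a b] by simp
  have aBb: "cinner a (B *v b) = cnj c"
    using cinner_hermitian[OF B] cinner_commute by (metis c_def)
  have ccnj: "c * cnj c = complex_of_real (m * m)"
    unfolding m_def using complex_norm_square[of c] by (simp add: power2_eq_square)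
  have l1: "lam * cnj c = complex_of_real (s * m)" and l2: "cnj lam * c = complex_of_real (s * m)"
    using m0 by (simp_all add: lam_def mult.assoc mult.commute[of "cnj c"] ccnj)
  have "cnj lam * lam = complex_of_real ((s / m) * (s / m)) * (c * cnj c)"
    by (simp add: lam_def mult_ac)
  also have "\<dots> = complex_of_real (s * s)"
    using m0 by (simp add: ccnj del: of_real_mult)
  finally have l3: "cnj lam * lam = complex_of_real (s * s)" .
  have yy: "cinner y y = complex_of_real (1 + s * s)"
    using l3 by (simp add: y_def cinner_add_left cinner_add_right cinner_scale_left
        cinner_scale_right aa bb ab ba mult.commute del: of_real_mult)
  have "cinner y (B *v y) = cinner a (B *v a) + lam * cnj c + cnj lam * c
      + cnj lam * lam * cinner b (B *v b)"
    unfolding y_def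
    by (simp add: vector_scalar_commute cinner_add_left cinner_add_right cinner_scale_left
        cinner_scale_right aBb c_def algebra_simps)
  then have yBy: "Re (cinner y (B *v y)) = al + 2 * s * m + s * s * be"
    unfolding l1 l2 l3 by (simp add: al_def be_def)
  have s2: "0 < 1 + s * s"
    by (simp add: add_pos_nonneg)
  then have mu2: "mu * mu = 1 / (1 + s * s)"
    by (simp add: mu_def)
  define w where "w = complex_of_real mu *s y"
  have "cinner w w = complex_of_real (mu * mu * (1 + s * s))"
    by (simp add: w_def cinner_scale_left cinner_scale_right yy)
  then have unit: "cinner w w = 1"
    using mu2 s2 by simp
  have "Re (cinner w (B *v w)) = mu * mu * (al + 2 * s * m + s * s * be)"
    using yBy by (simp add: w_def vector_scalar_commute cinner_scale_left cinner_scale_right)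
  then have gain: "al < Re (cinner w (B *v w))"
    using rotation_gain[OF m0 s_def] by (simp add: mu2)
  have "w = complex_of_real mu *s a + (complex_of_real mu * lam) *s b"
    by (simp add: w_def y_def vec_eq_iff algebra_simps)
  then show ?thesis
    using unit gain unfolding al_def by blast
qed

lemma orth_proj_not_maximal:
  fixes B P :: "complex^'n^'n" and a b :: "complex^'n"
  assumes B: "hermitian B" and P: "orth_proj k P"
    and aa: "cinner a a = 1" and bb: "cinner b b = 1" and Pa: "P *v a = a" and Pb: "P *v b = 0"
    and c0: "cinner b (B *v a) \<noteq> 0"
  shows "\<exists>R. orth_proj k R \<and> Re (mtrace (B ** P)) < Re (mtrace (B ** R))"
proof -
  have Ph: "hermitian P"
    using P by (simp add: orth_proj_def)
  have ab: "cinner a b = 0"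
    using cinner_hermitian[OF Ph, of a b] Pa Pb by simp
  obtain u v where ww: "cinner (u *s a + v *s b) (u *s a + v *s b) = 1"
    and gain: "Re (cinner a (B *v a)) < Re (cinner (u *s a + v *s b) (B *v (u *s a + v *s b)))"
    using exists_rotation_increasing_form[OF B aa bb ab c0] by blast
  define w where "w = u *s a + v *s b"
  have gain_w: "Re (cinner a (B *v a)) < Re (cinner w (B *v w))"
    using gain by (simp add: w_def)
  have "P *v w = cinner a w *s a"
    by (simp add: w_def matrix_vector_right_distrib vector_scalar_commute Pa Pb
        cinner_add_right cinner_scale_right aa ab)
  then have R: "orth_proj k (P - outer a a + outer w w)"
    using orth_proj_rank_one_exchange[OF P aa _ Pa] ww by (simp add: w_def)
  have "mtrace (B ** (P - outer a a + outer w w))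
      = mtrace (B ** P) - cinner a (B *v a) + cinner w (B *v w)"
    by (simp add: matrix_add_ldistrib matrix_diff_ldistrib mtrace_add mtrace_diff mtrace_mult_outer)
  then show ?thesis
    using R gain_w by (intro exI[of _ "P - outer a a + outer w w"]) simp
qed

lemma commute_of_compl_mult_eq_zero:
  fixes B P :: "complex^'n^'n"
  assumes B: "hermitian B" and Ph: "hermitian P" and Pi: "P ** P = P"
    and z: "(mat 1 - P) ** (B ** P) = 0"
  shows "B ** P = P ** B"
proof -
  have "adj ((mat 1 - P) ** (B ** P)) = (P ** B) ** (mat 1 - P)"
    using B Ph by (simp add: adj_mult adj_diff hermitian_iff_adj matrix_mul_assoc)
  then have "P ** B = P ** B ** P"
    using z by (simp add: matrix_diff_ldistrib)
  moreover have "B ** P = P ** (B ** P)"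
    using z by (simp add: matrix_diff_rdistrib)
  ultimately show ?thesis
    by (simp add: matrix_mul_assoc)
qed

lemma SH_commute:
  fixes B P :: "complex^'n^'n"
  assumes P: "orth_proj k P" and SH: "B \<in> SH k P"
  shows "B ** P = P ** B"
proof (rule ccontr)
  assume ne: "B ** P \<noteq> P ** B"
  have B: "hermitian B"
    and max: "\<And>R. orth_proj k R \<Longrightarrow> cmod (mtrace (B ** R)) \<le> Re (mtrace (B ** P))"
    using SH mem_SH_iff[OF P] by auto
  have Ph: "hermitian P" and Pi: "P ** P = P"
    using P by (auto simp: orth_proj_def)
  define Q where "Q = mat 1 - P"
  note Q = compl_proj[OF Ph Pi, folded Q_def]
  have "Q ** (B ** P) \<noteq> 0"
    using commute_of_compl_mult_eq_zero[OF B Ph Pi] ne by (auto simp: Q_def)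
  then obtain i j where "(Q ** (B ** P))$i$j \<noteq> 0"
    by (auto simp: vec_eq_iff)
  then have pq: "cinner (column i Q) (B *v column j P) \<noteq> 0"
    by (simp add: hermitian_mult_entry[OF Q(1)] column_matrix_mult)
  then have "column j P \<noteq> 0" "column i Q \<noteq> 0"
    by auto
  then obtain ra rb where ra: "ra \<noteq> 0" "cinner (ra *s column j P) (ra *s column j P) = 1"
    and rb: "rb \<noteq> 0" "cinner (rb *s column i Q) (rb *s column i Q) = 1"
    using exists_unit_multiple by metis
  have "P *v (ra *s column j P) = ra *s column j P" "P *v (rb *s column i Q) = 0"
    by (simp_all add: vector_scalar_commute column_matrix_mult[symmetric] Pi Q(3))
  moreover have "cinner (rb *s column i Q) (B *v (ra *s column j P)) \<noteq> 0"
    using pq ra(1) rb(1) by (simp add: vector_scalar_commute cinner_scale_left cinner_scale_right)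
  ultimately obtain R where "orth_proj k R" "Re (mtrace (B ** P)) < Re (mtrace (B ** R))"
    using orth_proj_not_maximal[OF B P ra(2) rb(2)] by blast
  then show False
    using max complex_Re_le_cmod[of "mtrace (B ** R)"] by fastforce
qed

lemma span_SH_eq_commutant:
  assumes P: "orth_proj k P"
  shows "span (SH k P) = commutant P"
proof
  have "SH k P \<subseteq> commutant P"
    using SH_commute[OF P] by (auto simp: commutant_def SH_def)
  then show "span (SH k P) \<subseteq> commutant P"
    by (rule span_minimal) (rule subspace_commutant)
  show "commutant P \<subseteq> span (SH k P)"
    by (rule commutant_subset_span_SH[OF P])
qed

section \<open>Projections with equal commutants\<close>

lemma commutant_subset_imp_proj_dichotomy:
  fixes P Q :: "complex^'n^'n"
  assumes Ph: "hermitian P" and Pi: "P ** P = P" and Qh: "hermitian Q" and Qi: "Q ** Q = Q"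
    and sub: "commutant Q \<subseteq> commutant P"
  shows "P ** Q = 0 \<or> (mat 1 - P) ** Q = 0"
proof (rule ccontr)
  assume "\<not> (P ** Q = 0 \<or> (mat 1 - P) ** Q = 0)"
  then obtain j j' where x0: "column j (P ** Q) \<noteq> 0" and y0: "column j' ((mat 1 - P) ** Q) \<noteq> 0"
    by (auto simp: vec_eq_iff column_def)
  define x where "x = column j (P ** Q)"
  define y where "y = column j' ((mat 1 - P) ** Q)"
  have "Q \<in> commutant P"
    using sub Qh by (auto simp: commutant_def)
  then have QP: "Q ** P = P ** Q"
    by (simp add: commutant_def)
  have Px: "P *v x = x" and Qx: "Q *v x = x" and Py: "P *v y = 0" and Qy: "Q *v y = y"
    unfolding x_def y_def column_matrix_mult[symmetric]
    by (simp_all add: matrix_mul_assoc matrix_diff_ldistrib matrix_diff_rdistrib Pi QP)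
       (simp_all add: matrix_mul_assoc[symmetric] Qi)
  define C where "C = outer x y + outer y x"
  have Ch: "hermitian C"
    by (simp add: C_def hermitian_iff_adj adj_add adj_outer add.commute)
  have "C ** Q = Q ** C"
    using Qh by (simp add: C_def matrix_add_rdistrib matrix_add_ldistrib matrix_mult_outer
        outer_mult_matrix hermitian_iff_adj Qx Qy)
  then have "C ** P = P ** C"
    using sub Ch by (auto simp: commutant_def)
  then have eq: "outer y x = outer x y"
    using Ph by (simp add: C_def matrix_add_rdistrib matrix_add_ldistrib matrix_mult_outer
        outer_mult_matrix hermitian_iff_adj Px Py)
  have "cinner x y = 0"
    using cinner_hermitian[OF Ph, of x y] Px Py by simp
  then have "outer y x *v y = 0"
    by (simp add: outer_mult_vector)
  moreover have "outer x y *v y \<noteq> 0"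
    using Re_cinner_self_pos[of y] x0 y0 by (auto simp: outer_mult_vector x_def y_def)
  ultimately show False
    using eq by simp
qed

lemma proj_cases_of_commutant_eq:
  fixes P Q :: "complex^'n^'n"
  assumes Ph: "hermitian P" and Pi: "P ** P = P" and Qh: "hermitian Q" and Qi: "Q ** Q = Q"
    and eq: "commutant P = commutant Q"
  shows "P = Q \<or> P = mat 1 - Q \<or> P = 0 \<or> P = mat 1"
proof -
  note Qc = compl_proj[OF Qh Qi]
  have "P ** Q = 0 \<or> (mat 1 - P) ** Q = 0"
    by (rule commutant_subset_imp_proj_dichotomy[OF Ph Pi Qh Qi]) (simp add: eq)
  then have "P ** Q = 0 \<or> Q = P ** Q"
    by (simp add: matrix_diff_rdistrib)
  moreover have "P ** (mat 1 - Q) = 0 \<or> (mat 1 - P) ** (mat 1 - Q) = 0"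
    by (rule commutant_subset_imp_proj_dichotomy[OF Ph Pi Qc(1,2)])
       (simp add: eq commutant_compl)
  then have "P = P ** Q \<or> mat 1 + P ** Q = P + Q"
    by (simp add: matrix_diff_ldistrib matrix_diff_rdistrib algebra_simps)
  ultimately show ?thesis
    by (auto simp: algebra_simps)
qed

theorem mainTheorem10:
  fixes P Q :: "complex^'n^'n" and k :: nat
  assumes "1 \<le> k" and "k < CARD('n)"
    and "orth_proj k P" and "orth_proj k Q"
  shows "span (SH k P) = span (SH k Q) \<longleftrightarrow>
         (P = Q \<or> (CARD('n) = 2 * k \<and> P = mat 1 - Q))"
  unfolding span_SH_eq_commutant[OF assms(3)] span_SH_eq_commutant[OF assms(4)]
proof
  have Ph: "hermitian P" and Pi: "P ** P = P" and Pt: "mtrace P = of_nat k"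
    and Qh: "hermitian Q" and Qi: "Q ** Q = Q" and Qt: "mtrace Q = of_nat k"
    using assms(3,4) by (auto simp: orth_proj_def)
  assume "commutant P = commutant Q"
  then have "P = Q \<or> P = mat 1 - Q \<or> P = 0 \<or> P = mat 1"
    by (rule proj_cases_of_commutant_eq[OF Ph Pi Qh Qi])
  moreover have "P \<noteq> 0"
    using assms(1) Pt by (auto simp: mtrace_def)
  moreover have "P \<noteq> mat 1"
    using assms(2) Pt by (auto simp: mtrace_mat1)
  moreover have "CARD('n) = 2 * k" if "P = mat 1 - Q"
  proof -
    have "mtrace (mat 1 :: complex^'n^'n) = of_nat (2 * k)"
      using that Pt Qt by (simp add: mtrace_diff)
    then show ?thesis
      by (simp only: mtrace_mat1 of_nat_eq_iff)
  qed
  ultimately show "P = Q \<or> CARD('n) = 2 * k \<and> P = mat 1 - Q"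
    by blast
next
  assume "P = Q \<or> CARD('n) = 2 * k \<and> P = mat 1 - Q"
  then show "commutant P = commutant Q"
    by (auto simp: commutant_compl)
qed

end
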